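(* Let $f:X\to Y$ be an equivariant map of nominal sets, $u\in X$ an $f$-safe element and $x\in\mathcal V$ with $x\notin\mathsf{bv}_f(u)$. Then $(x,u)$ is $(\theta_Y\circ(\mathcal V\times f))$-safe, where $\theta_Y\circ(\mathcal V\times f):\mathcal V\times X\to[\mathcal V]Y$, $(y,w)\mapsto\langle y\rangle f(w)$.
   Context: Nominal sets over a countably infinite set $\mathcal V$ of names; $\mathsf{supp}$ least finite support. $[\mathcal V]Y$ is the quotient of $\mathcal V\times Y$ by $(x_1,u_1)\sim(x_2,u_2)$ iff $(x_1\ z)\cdot u_1=(x_2\ z)\cdot u_2$ for some $z$ fresh for all four, classes $\langle x\rangle u$; $\theta_Y(x,u)=\langle x\rangle u$. For equivariant $f$: $u$ is $f$-safe if $|\mathsf{supp}(u)|=\max\{|\mathsf{supp}(v)|:v\in f^{-1}(f(u))\}$ (maximum existing); $\mathsf{bv}_f(u)=\mathsf{supp}(u)\setminus\mathsf{supp}(f(u))$. *)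

theory Defs
  imports Main "HOL-Library.Countable"
begin

text \<open>Nominal sets over a countably infinite type of names 'v.
  A nominal set is represented by a type 'x together with an action of
  finitely supported permutations of names.\<close>

definition fperm :: "('v \<Rightarrow> 'v) \<Rightarrow> bool" where
  "fperm p \<longleftrightarrow> bij p \<and> finite {a. p a \<noteq> a}"

definition tr :: "'v \<Rightarrow> 'v \<Rightarrow> 'v \<Rightarrow> 'v" where
  "tr a b = (\<lambda>c. if c = a then b else if c = b then a else c)"

definition supports :: "(('v \<Rightarrow> 'v) \<Rightarrow> 'x \<Rightarrow> 'x) \<Rightarrow> 'v set \<Rightarrow> 'x \<Rightarrow> bool" where
  "supports act A u \<longleftrightarrow> (\<forall>p. fperm p \<and> (\<forall>a\<in>A. p a = a) \<longrightarrow> act p u = u)"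

definition nominal :: "(('v \<Rightarrow> 'v) \<Rightarrow> 'x \<Rightarrow> 'x) \<Rightarrow> bool" where
  "nominal act \<longleftrightarrow> act id = id
     \<and> (\<forall>p q. fperm p \<and> fperm q \<longrightarrow> act (p \<circ> q) = act p \<circ> act q)
     \<and> (\<forall>u. \<exists>A. finite A \<and> supports act A u)"

definition supp :: "(('v \<Rightarrow> 'v) \<Rightarrow> 'x \<Rightarrow> 'x) \<Rightarrow> 'x \<Rightarrow> 'v set" where
  "supp act u = \<Inter>{A. finite A \<and> supports act A u}"

definition equivariant :: "(('v \<Rightarrow> 'v) \<Rightarrow> 'x \<Rightarrow> 'x) \<Rightarrow> (('v \<Rightarrow> 'v) \<Rightarrow> 'y \<Rightarrow> 'y) \<Rightarrow> ('x \<Rightarrow> 'y) \<Rightarrow> bool" where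
  "equivariant actX actY f \<longleftrightarrow> (\<forall>p u. fperm p \<longrightarrow> f (actX p u) = actY p (f u))"

definition pair_act :: "(('v \<Rightarrow> 'v) \<Rightarrow> 'x \<Rightarrow> 'x) \<Rightarrow> ('v \<Rightarrow> 'v) \<Rightarrow> 'v \<times> 'x \<Rightarrow> 'v \<times> 'x" where
  "pair_act act p = (\<lambda>(a, w). (p a, act p w))"

text \<open>Alpha-equivalence on V \<times> Y; the abstraction class <x>u is an element of [V]Y,
  represented as the equivalence class (a set of pairs).\<close>
definition alpha :: "(('v \<Rightarrow> 'v) \<Rightarrow> 'y \<Rightarrow> 'y) \<Rightarrow> 'v \<times> 'y \<Rightarrow> 'v \<times> 'y \<Rightarrow> bool" where
  "alpha act = (\<lambda>(x1, u1) (x2, u2). \<exists>z. z \<noteq> x1 \<and> z \<noteq> x2 \<and> z \<notin> supp act u1 \<and> z \<notin> supp act u2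
        \<and> act (tr x1 z) u1 = act (tr x2 z) u2)"

definition abs_class :: "(('v \<Rightarrow> 'v) \<Rightarrow> 'y \<Rightarrow> 'y) \<Rightarrow> 'v \<Rightarrow> 'y \<Rightarrow> ('v \<times> 'y) set" where
  "abs_class act x u = {q. alpha act (x, u) q}"

definition abs_act :: "(('v \<Rightarrow> 'v) \<Rightarrow> 'y \<Rightarrow> 'y) \<Rightarrow> ('v \<Rightarrow> 'v) \<Rightarrow> ('v \<times> 'y) set \<Rightarrow> ('v \<times> 'y) set" where
  "abs_act act p C = pair_act act p ` C"

definition safe :: "(('v \<Rightarrow> 'v) \<Rightarrow> 'x \<Rightarrow> 'x) \<Rightarrow> ('x \<Rightarrow> 'y) \<Rightarrow> 'x \<Rightarrow> bool" where
  "safe actX f u \<longleftrightarrow> (\<forall>v. f v = f u \<longrightarrow> card (supp actX v) \<le> card (supp actX u))"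

definition bv :: "(('v \<Rightarrow> 'v) \<Rightarrow> 'x \<Rightarrow> 'x) \<Rightarrow> (('v \<Rightarrow> 'v) \<Rightarrow> 'y \<Rightarrow> 'y) \<Rightarrow> ('x \<Rightarrow> 'y) \<Rightarrow> 'x \<Rightarrow> 'v set" where
  "bv actX actY f u = supp actX u - supp actY (f u)"

end

theory Submission
  imports Defs
begin

text \<open>If \<open>\<langle>y\<rangle>f(w) = \<langle>x\<rangle>f(u)\<close>, some name \<open>z\<close> has \<open>(x z)\<cdot>f(u) = (y z)\<cdot>f(w)\<close>, so by
  equivariance \<open>(x z)(y z)\<cdot>w\<close> lies in the \<open>f\<close>-fibre of \<open>u\<close>. Transpositions preserve the size
  of supports, hence \<open>|supp w| \<le> |supp u|\<close> by safety of \<open>u\<close>. Since \<open>supp (y, w) = {y} \<union> supp w\<close>,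
  it remains to see that \<open>y\<close> can only enlarge the support if \<open>x\<close> does: if \<open>x \<notin> supp u\<close> the
  count \<open>|supp w| + 1 \<le> |supp u| + 1\<close> suffices; if \<open>x \<in> supp u\<close>, then \<open>x \<in> supp f(u)\<close> as \<open>x\<close> is
  not bound, and transporting along the transpositions gives \<open>y \<in> supp f(w) \<subseteq> supp w\<close>.\<close>

lemma tr_tr [simp]: "tr a b (tr a b c) = c"
  by (simp add: tr_def)

lemma tr_image_iff: "c \<in> tr a b ` B \<longleftrightarrow> tr a b c \<in> B"
  by (metis image_iff tr_tr)

lemma fperm_tr: "fperm (tr a b)"
proof -
  have "bij (tr a b)"
    by (metis bijI' tr_tr)
  moreover have "{c. tr a b c \<noteq> c} \<subseteq> {a, b}"
    by (auto simp: tr_def)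
  ultimately show ?thesis
    unfolding fperm_def using finite_subset by blast
qed

lemma fperm_comp: "fperm p \<Longrightarrow> fperm q \<Longrightarrow> fperm (p \<circ> q)"
proof -
  assume p: "fperm p" and q: "fperm q"
  have "{c. (p \<circ> q) c \<noteq> c} \<subseteq> {c. q c \<noteq> c} \<union> {c. p c \<noteq> c}"
    by auto
  then have "finite {c. (p \<circ> q) c \<noteq> c}"
    using p q unfolding fperm_def by (meson finite_Un finite_subset)
  then show ?thesis
    using p q unfolding fperm_def by (simp add: bij_comp)
qed

lemma nominal_act_comp:
  "nominal act \<Longrightarrow> fperm p \<Longrightarrow> fperm q \<Longrightarrow> act (p \<circ> q) w = act p (act q w)"
  unfolding nominal_def by simp

lemma nominal_act_tr_tr:
  assumes "nominal act" shows "act (tr a b) (act (tr a b) w) = w"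
proof -
  have "tr a b \<circ> tr a b = id"
    by auto
  then show ?thesis
    using assms nominal_act_comp[OF assms fperm_tr fperm_tr, of a b a b w]
    unfolding nominal_def by simp
qed

lemma supp_subset_supports: "finite A \<Longrightarrow> supports act A w \<Longrightarrow> supp act w \<subseteq> A"
  unfolding supp_def by (rule Inter_lower) simp

lemma not_in_supp_obtain_supports:
  "c \<notin> supp act w \<Longrightarrow> \<exists>B. finite B \<and> supports act B w \<and> c \<notin> B"
  unfolding supp_def by blast

lemma nominal_finite_supports: "nominal act \<Longrightarrow> \<exists>A. finite A \<and> supports act A w"
  unfolding nominal_def by (elim conjE) (erule spec)

lemma finite_supp: "nominal act \<Longrightarrow> finite (supp act w)"
  using nominal_finite_supports finite_subset supp_subset_supports by metis

lemma supports_act_tr: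
  assumes "nominal act" "supports act B w"
  shows "supports act (tr a b ` B) (act (tr a b) w)"
  unfolding supports_def
proof (intro allI impI)
  fix q assume q: "fperm q \<and> (\<forall>c\<in>tr a b ` B. q c = c)"
  let ?r = "tr a b \<circ> q \<circ> tr a b"
  have fperm_r: "fperm ?r"
    using q by (simp add: fperm_comp fperm_tr)
  have "\<forall>c\<in>B. ?r c = c"
    using q by (simp add: tr_image_iff)
  then have r_fixes: "act ?r w = w"
    using assms(2) fperm_r unfolding supports_def by blast
  have "q \<circ> tr a b = tr a b \<circ> ?r"
    by (rule ext) simp
  then have "act q (act (tr a b) w) = act (tr a b \<circ> ?r) w"
    using nominal_act_comp[OF assms(1)] q fperm_tr by metis
  also have "\<dots> = act (tr a b) w"
    using nominal_act_comp[OF assms(1) fperm_tr fperm_r] r_fixes by simp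
  finally show "act q (act (tr a b) w) = act (tr a b) w" .
qed

lemma supp_act_tr_subset:
  assumes "nominal act" shows "supp act (act (tr a b) w) \<subseteq> tr a b ` supp act w"
proof
  fix c assume c: "c \<in> supp act (act (tr a b) w)"
  show "c \<in> tr a b ` supp act w"
  proof (rule ccontr)
    assume "c \<notin> tr a b ` supp act w"
    then obtain B where B: "finite B" "supports act B w" "tr a b c \<notin> B"
      using not_in_supp_obtain_supports by (metis tr_image_iff)
    then have "supp act (act (tr a b) w) \<subseteq> tr a b ` B"
      by (simp add: assms supp_subset_supports supports_act_tr)
    with c B(3) show False
      by (simp add: subset_iff tr_image_iff)
  qed
qed

lemma supp_act_tr:
  assumes "nominal act" shows "supp act (act (tr a b) w) = tr a b ` supp act w"
proof
  show "supp act (act (tr a b) w) \<subseteq> tr a b ` supp act w"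
    by (rule supp_act_tr_subset[OF assms])
  have "supp act w \<subseteq> tr a b ` supp act (act (tr a b) w)"
    using supp_act_tr_subset[OF assms, of a b "act (tr a b) w"]
    by (simp add: nominal_act_tr_tr[OF assms])
  then show "tr a b ` supp act w \<subseteq> supp act (act (tr a b) w)"
    by (auto simp: tr_image_iff)
qed

lemma card_supp_act_tr:
  assumes "nominal act" shows "card (supp act (act (tr a b) w)) = card (supp act w)"
proof -
  have "inj (tr a b)"
    by (metis injI tr_tr)
  then show ?thesis
    by (simp add: supp_act_tr[OF assms] card_image inj_on_subset)
qed

lemma supp_equivariant_subset:
  assumes "equivariant actX actY f" shows "supp actY (f w) \<subseteq> supp actX w"
proof -
  have supports_f: "supports actY A (f w)" if "supports actX A w" for A
    unfolding supports_def
  proof (intro allI impI)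
    fix p assume p: "fperm p \<and> (\<forall>a\<in>A. p a = a)"
    then have "f (actX p w) = f w"
      using that unfolding supports_def by simp
    moreover have "f (actX p w) = actY p (f w)"
      using assms p unfolding equivariant_def by blast
    ultimately show "actY p (f w) = f w"
      by simp
  qed
  show ?thesis
    unfolding supp_def[of actX]
  proof (rule Inter_greatest)
    fix A assume "A \<in> {A. finite A \<and> supports actX A w}"
    then show "supp actY (f w) \<subseteq> A"
      by (simp add: supports_f supp_subset_supports)
  qed
qed

lemma supp_pair_act_subset:
  "supp (pair_act act) (y, w) \<subseteq> insert y (supp act w)"
proof
  fix c assume c: "c \<in> supp (pair_act act) (y, w)"
  show "c \<in> insert y (supp act w)"
  proof (rule ccontr)
    assume "c \<notin> insert y (supp act w)"
    then obtain B where B: "finite B" "supports act B w" "c \<notin> B" "c \<noteq> y"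
      using not_in_supp_obtain_supports[of c act w] by blast
    have "supports (pair_act act) (insert y B) (y, w)"
      unfolding supports_def
    proof (intro allI impI)
      fix p assume p: "fperm p \<and> (\<forall>a\<in>insert y B. p a = a)"
      then have "act p w = w"
        using B(2) unfolding supports_def by blast
      with p show "pair_act act p (y, w) = (y, w)"
        unfolding pair_act_def by simp
    qed
    then have "supp (pair_act act) (y, w) \<subseteq> insert y B"
      by (simp add: B(1) supp_subset_supports)
    with c B(3,4) show False
      by blast
  qed
qed

text \<open>Infinitely many names are needed: if a finite support \<open>A\<close> of \<open>(x, w)\<close> missed \<open>x\<close>, the
  transposition of \<open>x\<close> with a name outside \<open>A \<union> {x}\<close> would fix \<open>A\<close> but move \<open>x\<close>.\<close>

lemma supp_pair_act_supset:
  assumes "infinite (UNIV :: 'v set)"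
  shows "insert x (supp act w) \<subseteq> supp (pair_act act) (x :: 'v, w)"
  unfolding supp_def[of "pair_act act"]
proof (rule Inter_greatest)
  fix A assume "A \<in> {A. finite A \<and> supports (pair_act act) A (x, w)}"
  then have A: "finite A" "supports (pair_act act) A (x, w)"
    by auto
  have "supports act A w"
    unfolding supports_def
  proof (intro allI impI)
    fix p assume "fperm p \<and> (\<forall>a\<in>A. p a = a)"
    then have "pair_act act p (x, w) = (x, w)"
      using A(2) unfolding supports_def by blast
    then show "act p w = w"
      unfolding pair_act_def by simp
  qed
  then have "supp act w \<subseteq> A"
    by (rule supp_subset_supports[OF A(1)])
  moreover have "x \<in> A"
  proof (rule ccontr)
    assume "x \<notin> A"
    have "finite (insert x A)"
      using A(1) by simp
    then obtain b where b: "b \<notin> insert x A"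
      using assms by (meson ex_new_if_finite)
    with \<open>x \<notin> A\<close> have "\<forall>a\<in>A. tr x b a = a"
      by (auto simp: tr_def)
    then have "fperm (tr x b) \<and> (\<forall>a\<in>A. tr x b a = a)"
      by (intro conjI fperm_tr)
    then have "pair_act act (tr x b) (x, w) = (x, w)"
      using A(2) unfolding supports_def by blast
    then have "tr x b x = x"
      unfolding pair_act_def by simp
    with b show False
      by (simp add: tr_def split: if_splits)
  qed
  ultimately show "insert x (supp act w) \<subseteq> A"
    by blast
qed

lemma supp_pair_act:
  "infinite (UNIV :: 'v set) \<Longrightarrow> supp (pair_act act) (x :: 'v, w) = insert x (supp act w)"
  by (intro subset_antisym supp_pair_act_subset supp_pair_act_supset)

lemma abs_class_eq_obtain_tr:
  assumes "infinite (UNIV :: 'v set)" "nominal act"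
    and "abs_class act y v = abs_class act x u"
  obtains z :: 'v where "act (tr x z) u = act (tr y z) v"
proof -
  have "finite (insert y (supp act v))"
    by (simp add: finite_supp[OF assms(2)])
  then obtain z0 where "z0 \<notin> insert y (supp act v)"
    using assms(1) by (meson ex_new_if_finite)
  then have "(y, v) \<in> abs_class act y v"
    unfolding abs_class_def alpha_def by auto
  then have "alpha act (x, u) (y, v)"
    using assms(3) unfolding abs_class_def by simp
  then show ?thesis
    using that unfolding alpha_def by auto
qed

context
  fixes actX :: "('v \<Rightarrow> 'v) \<Rightarrow> 'x \<Rightarrow> 'x" and actY :: "('v \<Rightarrow> 'v) \<Rightarrow> 'y \<Rightarrow> 'y" and f :: "'x \<Rightarrow> 'y"
  assumes nominal_X: "nominal actX" and nominal_Y: "nominal actY"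
    and equivariant_f: "equivariant actX actY f"
begin

lemma card_supp_le_if_tr_related:
  assumes "safe actX f u" and rel: "actY (tr x z) (f u) = actY (tr y z) (f w)"
  shows "card (supp actX w) \<le> card (supp actX u)"
proof -
  have f_tr: "f (actX (tr a b) v) = actY (tr a b) (f v)" for a b v
    using equivariant_f unfolding equivariant_def by (simp add: fperm_tr)
  define v where "v = actX (tr x z) (actX (tr y z) w)"
  have "f v = actY (tr x z) (actY (tr x z) (f u))"
    unfolding v_def f_tr rel ..
  then have "f v = f u"
    by (simp add: nominal_act_tr_tr[OF nominal_Y])
  then have "card (supp actX v) \<le> card (supp actX u)"
    using assms(1) unfolding safe_def by blast
  then show ?thesis
    unfolding v_def card_supp_act_tr[OF nominal_X] .
qed

lemma free_name_if_tr_related: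
  assumes "x \<in> supp actY (f u)" and rel: "actY (tr x z) (f u) = actY (tr y z) (f w)"
  shows "y \<in> supp actX w"
proof -
  have "tr x z x \<in> tr y z ` supp actY (f w)"
    using assms(1) rel supp_act_tr[OF nominal_Y] by (metis imageI)
  then have "tr y z (tr x z x) \<in> supp actY (f w)"
    unfolding tr_image_iff .
  then have "y \<in> supp actY (f w)"
    by (simp add: tr_def split: if_splits)
  then show ?thesis
    using supp_equivariant_subset[OF equivariant_f] by blast
qed

end

theorem lemma5p41:
  fixes actX :: "('v::countable \<Rightarrow> 'v) \<Rightarrow> 'x \<Rightarrow> 'x"
    and actY :: "('v \<Rightarrow> 'v) \<Rightarrow> 'y \<Rightarrow> 'y"
    and f :: "'x \<Rightarrow> 'y" and u :: 'x and x :: 'v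
  assumes "infinite (UNIV :: 'v set)"
    and "nominal actX" and "nominal actY"
    and "equivariant actX actY f"
    and "safe actX f u"
    and "x \<notin> bv actX actY f u"
  shows "safe (pair_act actX) (\<lambda>(y, w). abs_class actY y (f w)) (x, u)"
  unfolding safe_def
proof (clarify)
  fix y w assume "abs_class actY y (f w) = abs_class actY x (f u)"
  then obtain z where rel: "actY (tr x z) (f u) = actY (tr y z) (f w)"
    using abs_class_eq_obtain_tr[OF assms(1,3)] by blast
  have card_le: "card (supp actX w) \<le> card (supp actX u)"
    by (rule card_supp_le_if_tr_related[OF assms(2-5) rel])
  have "card (insert y (supp actX w)) \<le> card (insert x (supp actX u))"
  proof (cases "x \<in> supp actX u")
    case True
    then have "y \<in> supp actX w"
      using assms(6) free_name_if_tr_related[OF assms(2-4) _ rel] unfolding bv_def by blast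
    with True card_le show ?thesis
      by (simp add: insert_absorb)
  next
    case False
    with card_le show ?thesis
      by (simp add: card_insert_if finite_supp[OF assms(2)])
  qed
  then show "card (supp (pair_act actX) (y, w)) \<le> card (supp (pair_act actX) (x, u))"
    by (simp add: supp_pair_act[OF assms(1)])
qed

end
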